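(* Let $r\in\mathbb{N}\setminus\{0\}$ and let \[ G=\left\langle a_1,\ldots,a_r,t_1,\ldots,t_r \;\middle|\; a_ia_j=a_ja_i,\ t_it_j=t_jt_i,\ t_i^2=1,\ t_i^{-1}a_jt_i=\begin{cases}a_j & i\neq j\\ a_i^{-1} & i=j\end{cases}\ (1\le i,j\le r)\right\rangle . \] Let $s\in\mathbb{N}\setminus\{0\}$. Then $\alpha_{G\times\mathbb{Z}^s}\sim (n\mapsto n^{r+1})$. In particular, for every $m,k\in\mathbb{N}\setminus\{0\}$ with $m\geq k$, there is a virtually abelian group of rank $m$ whose automorphic growth rate is $n\mapsto n^k$.
   Context: For a finitely generated group $G$ with finite generating set $\Sigma$, the automorphic growth function $\alpha_{G,\Sigma}\colon\mathbb{N}\to\mathbb{N}$ sends $n$ to the number of orbits of the natural action of $\operatorname{Aut}(G)$ on $G$ that contain an element of word length at most $n$ with respect to $\Sigma$. For non-decreasing non-zero functions $f,g\colon\mathbb{N}\to\mathbb{N}$ write $f\preccurlyeq g$ if there is $\lambda\in\mathbb{N}\setminus\{0\}$ with $f(n)\le\lambda g(\lambda n+\lambda)+\lambda$ for all $n$, and $f\sim g$ if $f\preccurlyeq g$ and $g\preccurlyeq f$. The $\sim$-class of $\alpha_{G,\Sigma}$ does not depend on $\Sigma$ and is denoted $\alpha_G$ (the automorphic growth rate). The rank of a finitely generated virtually abelian group is the rank of a finite-index free abelian subgroup. *)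

theory Defs
  imports "HOL-Algebra.Coset" "HOL-Algebra.Generated_Groups"
begin

definition wordlen :: "('a, 'b) monoid_scheme \<Rightarrow> 'a set \<Rightarrow> 'a \<Rightarrow> nat" where
  "wordlen G S g = (LEAST n. \<exists>ws. length ws = n \<and> set ws \<subseteq> S \<union> m_inv G ` S
                              \<and> foldr (\<lambda>x y. x \<otimes>\<^bsub>G\<^esub> y) ws \<one>\<^bsub>G\<^esub> = g)"

definition aut_orbit :: "('a, 'b) monoid_scheme \<Rightarrow> 'a \<Rightarrow> 'a set" where
  "aut_orbit G g = {\<phi> g | \<phi>. \<phi> \<in> iso G G}"

definition autgrowth :: "('a, 'b) monoid_scheme \<Rightarrow> 'a set \<Rightarrow> nat \<Rightarrow> nat" where
  "autgrowth G S n = card (aut_orbit G ` {g \<in> carrier G. wordlen G S g \<le> n})"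

definition gen_set :: "('a, 'b) monoid_scheme \<Rightarrow> 'a set \<Rightarrow> bool" where
  "gen_set G S \<longleftrightarrow> finite S \<and> S \<subseteq> carrier G \<and> generate G S = carrier G"

definition growth_le :: "(nat \<Rightarrow> nat) \<Rightarrow> (nat \<Rightarrow> nat) \<Rightarrow> bool" where
  "growth_le f g \<longleftrightarrow> (\<exists>c::nat. c \<noteq> 0 \<and> (\<forall>n. f n \<le> c * g (c * n + c) + c))"

definition growth_equiv :: "(nat \<Rightarrow> nat) \<Rightarrow> (nat \<Rightarrow> nat) \<Rightarrow> bool" where
  "growth_equiv f g \<longleftrightarrow> growth_le f g \<and> growth_le g f"

definition Zpow :: "nat \<Rightarrow> (nat \<Rightarrow> int) monoid" where
  "Zpow m = \<lparr>carrier = {v. \<forall>i\<ge>m. v i = 0}, mult = (\<lambda>v w i. v i + w i), one = (\<lambda>_. 0)\<rparr>"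

definition virt_abelian_rank :: "('a, 'b) monoid_scheme \<Rightarrow> nat \<Rightarrow> bool" where
  "virt_abelian_rank G m \<longleftrightarrow> group G \<and>
     (\<exists>H. subgroup H G \<and> finite (rcosets\<^bsub>G\<^esub> H) \<and> G\<lparr>carrier := H\<rparr> \<cong> Zpow m)"

type_synonym elem = "(nat \<Rightarrow> int) \<times> (nat \<Rightarrow> bool) \<times> (nat \<Rightarrow> int)"

text \<open>Concrete model of G x Z^s: a triple (a, t, z) stands for
  (a_1^{a 0} ... a_r^{a (r-1)}) (t_1^{t 0} ... t_r^{t (r-1)}) times z in Z^s.  Generators: a_i = (e_i,0,0), t_i = (0,e_i,0).\<close>
definition GZ :: "nat \<Rightarrow> nat \<Rightarrow> elem monoid" where
  "GZ r s = \<lparr>carrier = {(a, t, z). (\<forall>i\<ge>r. a i = 0 \<and> \<not> t i) \<and> (\<forall>i\<ge>s. z i = 0)},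
            mult = (\<lambda>(a, t, z) (b, u, w).
                      ((\<lambda>i. a i + (if t i then - b i else b i)), (\<lambda>i. t i \<noteq> u i), (\<lambda>i. z i + w i))),
            one = ((\<lambda>_. 0), (\<lambda>_. False), (\<lambda>_. 0))\<rparr>"

end

theory Submission
  imports Defs
begin

(* An element of G x Z^s is a triple (a, t, z); its norm |a|_1 + |z|_1 is comparable with its word
   length, up to an additive constant accounting for the 2^r values of t.

   Upper bound: automorphisms of the free factor Z^s act on z alone, and Euclid's algorithm by
   transvections moves z to d e_0 with 0 <= d <= |z|_1. So every orbit meeting the ball of radius n
   contains one of the O(n^(r+1)) elements (a, t, d e_0) with entries of size O(n).

   Lower bound: an automorphism phi preserves the elements commuting with all their conjugates (the
   translations (a, 0, z)) and the centre (the elements (0, 0, z)). The relations t_i a_i t_i = a_i^-1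
   and t_l a_i = a_i t_l (l /= i) force phi(a_i) = (b, 0, 0) with b supported on coordinates negated by
   phi(t_i) and by no other phi(t_l). For g = (a, 0, k e_0) one has g (t_i g t_i)^-1 = a_i^(2 a_i), and
   comparing this with its image under phi shows that phi(g) = (a', 0, k' e_0) satisfies a'_j = a_i b_j,
   hence a_i <= a'_(sigma i) for an injection sigma; likewise k divides k'. If each a_i lies in
   (i n, (i+1) n], then sigma is the identity, and applying this to phi and its inverse shows that the
   n^(r+1) such elements with 1 <= k <= n lie in distinct orbits, all inside a ball of radius O(n). *)

section \<open>Word length\<close>

context group
begin

lemma foldr_mult_closed: "set xs \<subseteq> carrier G \<Longrightarrow> foldr (\<otimes>) xs \<one> \<in> carrier G"
  by (induction xs) auto

lemma foldr_mult_append: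
  assumes "set xs \<subseteq> carrier G" "set ys \<subseteq> carrier G"
  shows "foldr (\<otimes>) (xs @ ys) \<one> = foldr (\<otimes>) xs \<one> \<otimes> foldr (\<otimes>) ys \<one>"
  using assms by (induction xs) (auto simp: m_assoc foldr_mult_closed)

lemma foldr_mult_in_generate:
  "E \<subseteq> carrier G \<Longrightarrow> set xs \<subseteq> E \<Longrightarrow> foldr (\<otimes>) xs \<one> \<in> generate G E"
  by (induction xs) (auto intro: generate.intros)

lemma subadditive_foldr_mult_le:
  fixes N :: "'a \<Rightarrow> nat"
  assumes "set xs \<subseteq> carrier G" "\<And>x. x \<in> set xs \<Longrightarrow> N x \<le> C"
    and subadd: "\<And>x y. x \<in> carrier G \<Longrightarrow> y \<in> carrier G \<Longrightarrow> N (x \<otimes> y) \<le> N x + N y"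
    and "N \<one> = 0"
  shows "N (foldr (\<otimes>) xs \<one>) \<le> C * length xs"
  using assms(1,2)
proof (induction xs)
  case (Cons x xs)
  then have "N (foldr (\<otimes>) (x # xs) \<one>) \<le> N x + N (foldr (\<otimes>) xs \<one>)"
    using subadd foldr_mult_closed by simp
  also have "\<dots> \<le> C + C * length xs"
    using Cons by (intro add_mono) auto
  finally show ?case by simp
qed (simp add: \<open>N \<one> = 0\<close>)

lemma wordlen_le_length:
  "set ws \<subseteq> S \<union> m_inv G ` S \<Longrightarrow> wordlen G S (foldr (\<otimes>) ws \<one>) \<le> length ws"
  unfolding wordlen_def by (rule Least_le) blast

lemma shortest_word_exists:
  assumes "S \<subseteq> carrier G" "g \<in> generate G S"
  obtains ws where "set ws \<subseteq> S \<union> m_inv G ` S" "length ws = wordlen G S g" "foldr (\<otimes>) ws \<one> = g"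
proof -
  have "\<exists>ws. set ws \<subseteq> S \<union> m_inv G ` S \<and> foldr (\<otimes>) ws \<one> = g"
    using assms(2)
  proof induction
    case one
    show ?case by (rule exI[of _ "[]"]) simp
  next
    case (incl h)
    then show ?case using assms(1) by (intro exI[of _ "[h]"]) auto
  next
    case (inv h)
    then show ?case using assms(1) by (intro exI[of _ "[inv h]"]) auto
  next
    case (eng h1 h2)
    then obtain ws1 ws2 where "set ws1 \<subseteq> S \<union> m_inv G ` S" "foldr (\<otimes>) ws1 \<one> = h1"
      "set ws2 \<subseteq> S \<union> m_inv G ` S" "foldr (\<otimes>) ws2 \<one> = h2" by blast
    moreover have "set ws1 \<subseteq> carrier G" "set ws2 \<subseteq> carrier G"
      using calculation assms(1) by auto
    ultimately show ?case
      by (intro exI[of _ "ws1 @ ws2"]) (simp add: foldr_mult_append del: foldr_append)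
  qed
  then obtain ws0 where ws0: "set ws0 \<subseteq> S \<union> m_inv G ` S" "foldr (\<otimes>) ws0 \<one> = g" by blast
  define P where
    "P n \<longleftrightarrow> (\<exists>ws. length ws = n \<and> set ws \<subseteq> S \<union> m_inv G ` S \<and> foldr (\<otimes>) ws \<one> = g)" for n
  have "P (length ws0)" unfolding P_def using ws0 by blast
  then have "P (LEAST n. P n)" by (rule LeastI)
  moreover have "wordlen G S g = (LEAST n. P n)" unfolding wordlen_def P_def ..
  ultimately show thesis using that unfolding P_def by auto
qed

lemma wordlen_one: "wordlen G S \<one> = 0"
  using wordlen_le_length[of "[]" S] by simp

lemma wordlen_mult:
  assumes "gen_set G S" "x \<in> carrier G" "y \<in> carrier G"
  shows "wordlen G S (x \<otimes> y) \<le> wordlen G S x + wordlen G S y"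
proof -
  have S: "S \<subseteq> carrier G" "generate G S = carrier G" using assms(1) by (auto simp: gen_set_def)
  obtain xs ys where
    xs: "set xs \<subseteq> S \<union> m_inv G ` S" "length xs = wordlen G S x" "foldr (\<otimes>) xs \<one> = x" and
    ys: "set ys \<subseteq> S \<union> m_inv G ` S" "length ys = wordlen G S y" "foldr (\<otimes>) ys \<one> = y"
    using shortest_word_exists S assms(2,3) by metis
  have "set xs \<subseteq> carrier G" "set ys \<subseteq> carrier G" using xs(1) ys(1) S(1) by auto
  then have "x \<otimes> y = foldr (\<otimes>) (xs @ ys) \<one>"
    using xs ys by (simp add: foldr_mult_append del: foldr_append)
  then show ?thesis using wordlen_le_length[of "xs @ ys" S] xs ys by simp
qed

lemma subadditive_le_wordlen:
  fixes N :: "'a \<Rightarrow> nat"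
  assumes "gen_set G S"
    and "\<And>x y. x \<in> carrier G \<Longrightarrow> y \<in> carrier G \<Longrightarrow> N (x \<otimes> y) \<le> N x + N y" and "N \<one> = 0"
  shows "\<exists>C. \<forall>g\<in>carrier G. N g \<le> C * wordlen G S g"
proof (intro exI ballI)
  have S: "finite S" "S \<subseteq> carrier G" "generate G S = carrier G"
    using assms(1) by (auto simp: gen_set_def)
  fix g assume "g \<in> carrier G"
  then obtain ws where ws: "set ws \<subseteq> S \<union> m_inv G ` S" "length ws = wordlen G S g" "foldr (\<otimes>) ws \<one> = g"
    using shortest_word_exists S by metis
  have "N (foldr (\<otimes>) ws \<one>) \<le> Max (N ` (S \<union> m_inv G ` S)) * length ws"
  proof (rule subadditive_foldr_mult_le[OF _ _ assms(2,3)])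
    show "set ws \<subseteq> carrier G" using ws(1) S(2) by auto
    show "N x \<le> Max (N ` (S \<union> m_inv G ` S))" if "x \<in> set ws" for x
      using S(1) ws(1) that by (intro Max_ge) auto
  qed
  then show "N g \<le> Max (N ` (S \<union> m_inv G ` S)) * wordlen G S g"
    using ws by simp
qed

lemma wordlen_le_decomposition_length:
  assumes "gen_set G S" "finite E" "E \<subseteq> carrier G"
    and "\<And>g. g \<in> carrier G \<Longrightarrow> \<exists>xs. set xs \<subseteq> E \<and> length xs \<le> \<mu> g \<and> foldr (\<otimes>) xs \<one> = g"
  shows "\<exists>L. \<forall>g\<in>carrier G. wordlen G S g \<le> L * \<mu> g"
proof (intro exI ballI)
  fix g assume "g \<in> carrier G"
  then obtain xs where xs: "set xs \<subseteq> E" "length xs \<le> \<mu> g" "foldr (\<otimes>) xs \<one> = g"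
    using assms(4) by blast
  have "wordlen G S x \<le> Max (wordlen G S ` E)" if "x \<in> set xs" for x
    using assms(2) xs(1) that by (intro Max_ge) auto
  then have "wordlen G S g \<le> Max (wordlen G S ` E) * length xs"
    using subadditive_foldr_mult_le[of xs "wordlen G S"] xs assms(1,3) wordlen_mult wordlen_one
    by auto
  also have "\<dots> \<le> Max (wordlen G S ` E) * \<mu> g" using xs(2) by simp
  finally show "wordlen G S g \<le> Max (wordlen G S ` E) * \<mu> g" .
qed

lemma gen_set_of_decomposition:
  assumes "finite E" "E \<subseteq> carrier G"
    and "\<And>g. g \<in> carrier G \<Longrightarrow> \<exists>xs. set xs \<subseteq> E \<and> foldr (\<otimes>) xs \<one> = g"
  shows "gen_set G E"
  unfolding gen_set_def
  using assms generate_incl[OF assms(2)] foldr_mult_in_generate[OF assms(2)] by blast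

end

lemma aut_orbitI: "\<phi> \<in> iso G G \<Longrightarrow> \<phi> g \<in> aut_orbit G g"
  unfolding aut_orbit_def by blast

lemma aut_orbit_refl: "g \<in> aut_orbit G g"
  unfolding aut_orbit_def using iso_set_refl by fastforce

lemma aut_orbit_trans: "h \<in> aut_orbit G g \<Longrightarrow> k \<in> aut_orbit G h \<Longrightarrow> k \<in> aut_orbit G g"
proof -
  assume "h \<in> aut_orbit G g" "k \<in> aut_orbit G h"
  then obtain \<phi> \<psi> where "\<phi> \<in> iso G G" "h = \<phi> g" "\<psi> \<in> iso G G" "k = \<psi> h"
    unfolding aut_orbit_def by blast
  then have "\<psi> \<circ> \<phi> \<in> iso G G" "k = (\<psi> \<circ> \<phi>) g" using iso_set_trans by auto
  then show ?thesis unfolding aut_orbit_def by blast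
qed

lemma (in group) aut_orbit_sym:
  assumes "g \<in> carrier G" "h \<in> aut_orbit G g"
  shows "g \<in> aut_orbit G h"
proof -
  obtain \<phi> where \<phi>: "\<phi> \<in> iso G G" "h = \<phi> g" using assms(2) unfolding aut_orbit_def by blast
  then have "inv_into (carrier G) \<phi> h = g"
    using assms(1) by (simp add: iso_iff inv_into_f_f)
  then show ?thesis using iso_set_sym[OF \<phi>(1)] unfolding aut_orbit_def by blast
qed

lemma (in group) aut_orbit_eq:
  assumes "g \<in> carrier G" "h \<in> aut_orbit G g"
  shows "aut_orbit G h = aut_orbit G g"
  using aut_orbit_trans[OF assms(2)] aut_orbit_trans[OF aut_orbit_sym[OF assms]] by blast

lemma iso_group_hom: "group G \<Longrightarrow> group H \<Longrightarrow> \<phi> \<in> iso G H \<Longrightarrow> group_hom G H \<phi>"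
  by (simp add: group_hom_def group_hom_axioms_def iso_imp_homomorphism)

definition central :: "('a, 'b) monoid_scheme \<Rightarrow> 'a \<Rightarrow> bool" where
  "central G x \<longleftrightarrow> (\<forall>h\<in>carrier G. x \<otimes>\<^bsub>G\<^esub> h = h \<otimes>\<^bsub>G\<^esub> x)"

definition commutes_with_conjugates :: "('a, 'b) monoid_scheme \<Rightarrow> 'a \<Rightarrow> bool" where
  "commutes_with_conjugates G x \<longleftrightarrow>
     (\<forall>h\<in>carrier G. x \<otimes>\<^bsub>G\<^esub> (h \<otimes>\<^bsub>G\<^esub> x \<otimes>\<^bsub>G\<^esub> inv\<^bsub>G\<^esub> h) = (h \<otimes>\<^bsub>G\<^esub> x \<otimes>\<^bsub>G\<^esub> inv\<^bsub>G\<^esub> h) \<otimes>\<^bsub>G\<^esub> x)"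

lemma central_iso:
  assumes "group G" "group H" "\<phi> \<in> iso G H" "x \<in> carrier G" "central G x"
  shows "central H (\<phi> x)"
proof -
  interpret group_hom G H \<phi> using iso_group_hom[OF assms(1-3)] .
  have "\<phi> x \<otimes>\<^bsub>H\<^esub> \<phi> h = \<phi> h \<otimes>\<^bsub>H\<^esub> \<phi> x" if "h \<in> carrier G" for h
    using assms(4,5) that unfolding central_def by (metis hom_mult)
  then show ?thesis using assms(3) unfolding central_def iso_iff by blast
qed

lemma commutes_with_conjugates_iso:
  assumes "group G" "group H" "\<phi> \<in> iso G H" "x \<in> carrier G" "commutes_with_conjugates G x"
  shows "commutes_with_conjugates H (\<phi> x)"
proof -
  interpret group_hom G H \<phi> using iso_group_hom[OF assms(1-3)] .
  have "\<phi> x \<otimes>\<^bsub>H\<^esub> (\<phi> h \<otimes>\<^bsub>H\<^esub> \<phi> x \<otimes>\<^bsub>H\<^esub> inv\<^bsub>H\<^esub> \<phi> h) =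
        (\<phi> h \<otimes>\<^bsub>H\<^esub> \<phi> x \<otimes>\<^bsub>H\<^esub> inv\<^bsub>H\<^esub> \<phi> h) \<otimes>\<^bsub>H\<^esub> \<phi> x" if "h \<in> carrier G" for h
  proof -
    have "\<phi> (x \<otimes>\<^bsub>G\<^esub> (h \<otimes>\<^bsub>G\<^esub> x \<otimes>\<^bsub>G\<^esub> inv\<^bsub>G\<^esub> h)) = \<phi> ((h \<otimes>\<^bsub>G\<^esub> x \<otimes>\<^bsub>G\<^esub> inv\<^bsub>G\<^esub> h) \<otimes>\<^bsub>G\<^esub> x)"
      using assms(5) that unfolding commutes_with_conjugates_def by simp
    then show ?thesis using assms(4) that by simp
  qed
  then show ?thesis using assms(3) unfolding commutes_with_conjugates_def iso_iff by blast
qed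

definition single_vec :: "nat \<Rightarrow> int \<Rightarrow> nat \<Rightarrow> int" where
  "single_vec i c = (\<lambda>j. if j = i then c else 0)"

definition l1norm :: "nat \<Rightarrow> (nat \<Rightarrow> int) \<Rightarrow> nat" where
  "l1norm n v = (\<Sum>i<n. nat \<bar>v i\<bar>)"

lemma l1norm_fun_upd: "i < n \<Longrightarrow> l1norm n (v(i := x)) + nat \<bar>v i\<bar> = l1norm n v + nat \<bar>x\<bar>"
  unfolding l1norm_def
  by (simp add: sum.remove[of "{..<n}" i] sum.cong[of "{..<n} - {i}" _ "\<lambda>k. nat \<bar>(v(i := x)) k\<bar>"])

lemma l1norm_eq_0_iff: "l1norm n v = 0 \<longleftrightarrow> (\<forall>i<n. v i = 0)"
  by (auto simp: l1norm_def)

lemma abs_le_l1norm: "i < n \<Longrightarrow> nat \<bar>v i\<bar> \<le> l1norm n v"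
  unfolding l1norm_def by (rule member_le_sum) auto

lemma l1norm_single_vec: "i < n \<Longrightarrow> l1norm n (single_vec i c) = nat \<bar>c\<bar>"
  by (simp add: l1norm_def single_vec_def if_distrib sum.delta cong: if_cong)

lemma l1norm_add_le: "l1norm n (\<lambda>i. v i + w i) \<le> l1norm n v + l1norm n w"
  unfolding l1norm_def sum.distrib[symmetric] by (rule sum_mono) linarith

lemma l1norm_sgn_step: "i < n \<Longrightarrow> v i \<noteq> 0 \<Longrightarrow> l1norm n (v(i := v i - sgn (v i))) + 1 = l1norm n v"
  using l1norm_fun_upd[of i n v "v i - sgn (v i)"] by (auto simp: sgn_if split: if_splits)

lemma shear_descent:
  fixes Z :: "(nat \<Rightarrow> int) set"
  assumes shear: "\<And>v i j c. v \<in> Z \<Longrightarrow> i < s \<Longrightarrow> j < s \<Longrightarrow> i \<noteq> j \<Longrightarrow> v(i := v i + c * v j) \<in> Z"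
    and "0 < s" "z \<in> Z" "\<forall>i\<ge>s. z i = 0"
  shows "\<exists>i<s. \<exists>c. nat \<bar>c\<bar> \<le> l1norm s z \<and> single_vec i c \<in> Z"
  using assms(3,4)
proof (induction "l1norm s z" arbitrary: z rule: less_induct)
  case less
  show ?case
  proof (cases "\<exists>i<s. \<exists>j<s. i \<noteq> j \<and> z i \<noteq> 0 \<and> z j \<noteq> 0")
    case True
    then obtain i j where ij: "i < s" "j < s" "i \<noteq> j" "z i \<noteq> 0" "z j \<noteq> 0" "\<bar>z j\<bar> \<le> \<bar>z i\<bar>"
      by (metis linorder_le_cases)
    define z' where "z' = z(i := z i + (- sgn (z i) * sgn (z j)) * z j)"
    \<comment> \<open>Euclid's step: the larger of two nonzero entries shrinks by the smaller one.\<close>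
    have "nat \<bar>z i + (- sgn (z i) * sgn (z j)) * z j\<bar> + nat \<bar>z j\<bar> = nat \<bar>z i\<bar>"
      using ij(4-6) by (auto simp: sgn_if)
    then have lt: "l1norm s z' < l1norm s z"
      using l1norm_fun_upd[of i s z "z i + (- sgn (z i) * sgn (z j)) * z j"] ij(1,5)
      unfolding z'_def by linarith
    have "z' \<in> Z" unfolding z'_def by (rule shear) (use less.prems ij in auto)
    moreover have "\<forall>k\<ge>s. z' k = 0" using less.prems ij unfolding z'_def by auto
    ultimately obtain k c where "k < s" "nat \<bar>c\<bar> \<le> l1norm s z'" "single_vec k c \<in> Z"
      using less.hyps[OF lt] by blast
    then show ?thesis using lt by (meson less_imp_le order_trans)
  next
    case False
    obtain i where i: "i < s" "\<forall>j<s. j \<noteq> i \<longrightarrow> z j = 0"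
      using False \<open>0 < s\<close> by metis
    then have "z = single_vec i (z i)"
      using less.prems(2) by (auto simp: single_vec_def fun_eq_iff) (meson not_le)
    then show ?thesis using less.prems(1) abs_le_l1norm[OF i(1)] i(1) by metis
  qed
qed

lemma shear_reduce_to_first_coordinate:
  fixes Z :: "(nat \<Rightarrow> int) set"
  assumes shear: "\<And>v i j c. v \<in> Z \<Longrightarrow> i < s \<Longrightarrow> j < s \<Longrightarrow> i \<noteq> j \<Longrightarrow> v(i := v i + c * v j) \<in> Z"
    and neg: "\<And>v. v \<in> Z \<Longrightarrow> (\<lambda>k. - v k) \<in> Z"
    and "0 < s" "z \<in> Z" "\<forall>i\<ge>s. z i = 0"
  shows "\<exists>d\<ge>0. nat d \<le> l1norm s z \<and> single_vec 0 d \<in> Z"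
proof -
  obtain i c where i: "i < s" "nat \<bar>c\<bar> \<le> l1norm s z" "single_vec i c \<in> Z"
    using shear_descent[OF shear assms(3-5)] by blast
  have c0: "single_vec 0 c \<in> Z"
  proof (cases "i = 0")
    case False
    define w where "w = (single_vec i c)(0 := single_vec i c 0 + 1 * single_vec i c i)"
    have "w \<in> Z" unfolding w_def using shear i False \<open>0 < s\<close> by blast
    then have "w(i := w i + (- 1) * w 0) \<in> Z" using shear i False \<open>0 < s\<close> by blast
    moreover have "w(i := w i + (- 1) * w 0) = single_vec 0 c"
      using False by (auto simp: w_def single_vec_def fun_eq_iff)
    ultimately show ?thesis by simp
  qed (use i in simp)
  show ?thesis
  proof (cases "0 \<le> c")
    case False
    have "(\<lambda>k. - single_vec 0 c k) = single_vec 0 (- c)" by (auto simp: single_vec_def)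
    then show ?thesis using neg[OF c0] False i(2) by (intro exI[of _ "- c"]) auto
  qed (use c0 i in auto)
qed

lemma funs_fixed_outside:
  fixes n :: nat
  assumes "\<And>i. i < n \<Longrightarrow> finite (I i)"
  shows finite_funs_fixed_outside: "finite {f. (\<forall>i<n. f i \<in> I i) \<and> (\<forall>i\<ge>n. f i = d)}"
    and card_funs_fixed_outside: "card {f. (\<forall>i<n. f i \<in> I i) \<and> (\<forall>i\<ge>n. f i = d)} = (\<Prod>i<n. card (I i))"
proof -
  let ?F = "{f. (\<forall>i<n. f i \<in> I i) \<and> (\<forall>i\<ge>n. f i = d)}"
  have bij: "bij_betw (\<lambda>f. restrict f {..<n}) ?F (PiE {..<n} I)"
    by (rule bij_betw_byWitness[where f'="\<lambda>g i. if i < n then g i else d"])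
      (auto simp: fun_eq_iff PiE_def extensional_def Pi_def)
  show "finite ?F" using bij_betw_finite[OF bij] assms by (auto intro: finite_PiE)
  show "card ?F = (\<Prod>i<n. card (I i))" using bij_betw_same_card[OF bij] by (simp add: card_PiE)
qed

lemma inj_on_lessThan_increasing_imp_id:
  fixes \<sigma> :: "nat \<Rightarrow> nat"
  assumes "\<sigma> ` {..<n} \<subseteq> {..<n}" "inj_on \<sigma> {..<n}" "\<And>i. i < n \<Longrightarrow> i \<le> \<sigma> i" "i < n"
  shows "\<sigma> i = i"
proof -
  have "\<sigma> ` {..<n} = {..<n}" using endo_inj_surj[OF _ assms(1,2)] by simp
  then have "(\<Sum>i<n. \<sigma> i) = (\<Sum>i<n. i)" using sum.reindex[OF assms(2), of id] by simp
  then show ?thesis using sum_mono_inv[of id "{..<n}" \<sigma>] assms(3,4) by fastforce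
qed

lemma growth_le_power:
  assumes "\<And>n. f n \<le> K * (n + 1) ^ d"
  shows "growth_le f (\<lambda>n. n ^ d)"
  unfolding growth_le_def
proof (intro exI conjI allI)
  fix n
  have "n + 1 \<le> (K + 1) * n + (K + 1)" by simp
  then have "K * (n + 1) ^ d \<le> (K + 1) * ((K + 1) * n + (K + 1)) ^ d"
    by (intro mult_mono power_mono) auto
  then show "f n \<le> (K + 1) * ((K + 1) * n + (K + 1)) ^ d + (K + 1)"
    using assms[of n] by linarith
qed simp

abbreviation transl :: "(nat \<Rightarrow> int) \<Rightarrow> (nat \<Rightarrow> int) \<Rightarrow> elem" where
  "transl a z \<equiv> (a, \<lambda>_. False, z)"

definition a_gen :: "nat \<Rightarrow> elem" where "a_gen i = transl (single_vec i 1) (\<lambda>_. 0)"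
definition t_gen :: "nat \<Rightarrow> elem" where "t_gen i = (\<lambda>_. 0, \<lambda>j. j = i, \<lambda>_. 0)"
definition z_gen :: elem where "z_gen = transl (\<lambda>_. 0) (single_vec 0 1)"

definition std_gens :: "nat \<Rightarrow> nat \<Rightarrow> elem set" where
  "std_gens r s = {transl (single_vec i c) (\<lambda>_. 0) | i c. i < r \<and> c \<in> {1, -1}}
     \<union> {t_gen i | i. i < r} \<union> {transl (\<lambda>_. 0) (single_vec i c) | i c. i < s \<and> c \<in> {1, -1}}"

definition GZ_norm :: "nat \<Rightarrow> nat \<Rightarrow> elem \<Rightarrow> nat" where
  "GZ_norm r s g = l1norm r (fst g) + l1norm s (snd (snd g))"

definition GZ_word_size :: "nat \<Rightarrow> nat \<Rightarrow> elem \<Rightarrow> nat" where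
  "GZ_word_size r s g = GZ_norm r s g + card {i. i < r \<and> fst (snd g) i}"

definition orbit_reps :: "nat \<Rightarrow> nat \<Rightarrow> ((nat \<Rightarrow> int) \<times> (nat \<Rightarrow> bool) \<times> int) set" where
  "orbit_reps r M =
     {a. (\<forall>i<r. a i \<in> {- int M..int M}) \<and> (\<forall>i\<ge>r. a i = 0)} \<times>
     {t. (\<forall>i<r. t i \<in> UNIV) \<and> (\<forall>i\<ge>r. t i = False)} \<times> {0..int M}"

lemma orbit_reps_finite_card:
  shows "finite (orbit_reps r M)" and "card (orbit_reps r M) = (2 * M + 1) ^ r * 2 ^ r * (M + 1)"
proof -
  let ?A = "{a. (\<forall>i<r. a i \<in> {- int M..int M}) \<and> (\<forall>i\<ge>r. a i = 0)}"
  let ?T = "{t. (\<forall>i<r. t i \<in> (UNIV :: bool set)) \<and> (\<forall>i\<ge>r. t i = False)}"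
  have "finite ?A" "finite ?T" by (rule finite_funs_fixed_outside; simp)+
  then show "finite (orbit_reps r M)" unfolding orbit_reps_def by simp
  have "card ?A = (2 * M + 1) ^ r"
    by (subst card_funs_fixed_outside) (simp_all add: nat_add_distrib nat_mult_distrib)
  moreover have "card ?T = 2 ^ r" by (subst card_funs_fixed_outside) simp_all
  moreover have "card {0..int M} = M + 1" by simp
  ultimately show "card (orbit_reps r M) = (2 * M + 1) ^ r * 2 ^ r * (M + 1)"
    unfolding orbit_reps_def by (simp add: card_cartesian_product algebra_simps)
qed

definition probe :: "(nat \<Rightarrow> int) \<Rightarrow> int \<Rightarrow> elem" where
  "probe a k = transl a (single_vec 0 k)"

definition t_all :: "nat \<Rightarrow> elem" where "t_all r = (\<lambda>_. 0, \<lambda>j. j < r, \<lambda>_. 0)"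

definition probe_coeffs :: "nat \<Rightarrow> nat \<Rightarrow> (nat \<Rightarrow> int) set" where
  "probe_coeffs r n = {a. (\<forall>i<r. a i \<in> {int (i * n)<..int ((i + 1) * n)}) \<and> (\<forall>i\<ge>r. a i = 0)}"

definition probes :: "nat \<Rightarrow> nat \<Rightarrow> elem set" where
  "probes r n = (\<lambda>(a, k). probe a k) ` (probe_coeffs r n \<times> {1..int n})"

definition transl_subgroup :: "nat \<Rightarrow> nat \<Rightarrow> elem set" where
  "transl_subgroup r s = {g \<in> carrier (GZ r s). fst (snd g) = (\<lambda>_. False)}"

context
  fixes r s :: nat
begin

abbreviation (input) \<Gamma> where "\<Gamma> \<equiv> GZ r s"

lemma GZ_carrier_iff [simp]:
  "(a, t, z) \<in> carrier \<Gamma> \<longleftrightarrow> (\<forall>i\<ge>r. a i = 0 \<and> \<not> t i) \<and> (\<forall>i\<ge>s. z i = 0)"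
  by (simp add: GZ_def)

lemma GZ_mult [simp]:
  "(a, t, z) \<otimes>\<^bsub>\<Gamma>\<^esub> (b, u, w) =
     ((\<lambda>i. a i + (if t i then - b i else b i)), (\<lambda>i. t i \<noteq> u i), (\<lambda>i. z i + w i))"
  by (simp add: GZ_def)

lemma GZ_one [simp]: "\<one>\<^bsub>\<Gamma>\<^esub> = ((\<lambda>_. 0), (\<lambda>_. False), (\<lambda>_. 0))"
  by (simp add: GZ_def)

lemma GZ_group: "group \<Gamma>"
proof (rule groupI)
  fix x y z assume "x \<in> carrier \<Gamma>" "y \<in> carrier \<Gamma>" "z \<in> carrier \<Gamma>"
  then show "x \<otimes>\<^bsub>\<Gamma>\<^esub> y \<otimes>\<^bsub>\<Gamma>\<^esub> z = x \<otimes>\<^bsub>\<Gamma>\<^esub> (y \<otimes>\<^bsub>\<Gamma>\<^esub> z)"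
    by (cases x; cases y; cases z) (auto simp: fun_eq_iff)
next
  fix x assume "x \<in> carrier \<Gamma>"
  moreover obtain a t z where "x = (a, t, z)" by (cases x)
  ultimately show "\<exists>y\<in>carrier \<Gamma>. y \<otimes>\<^bsub>\<Gamma>\<^esub> x = \<one>\<^bsub>\<Gamma>\<^esub>"
    by (intro bexI[of _ "(\<lambda>i. if t i then a i else - a i, t, \<lambda>i. - z i)"]) (auto simp: fun_eq_iff)
qed (auto simp: fun_eq_iff)

lemma GZ_inv [simp]:
  assumes "(a, t, z) \<in> carrier \<Gamma>"
  shows "inv\<^bsub>\<Gamma>\<^esub> (a, t, z) = ((\<lambda>i. if t i then a i else - a i), t, (\<lambda>i. - z i))"
  using assms by (intro group.inv_equality[OF GZ_group]) (auto simp: fun_eq_iff)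

lemma GZ_norm_mult: "GZ_norm r s (x \<otimes>\<^bsub>\<Gamma>\<^esub> y) \<le> GZ_norm r s x + GZ_norm r s y"
proof -
  obtain a t z b u w where xy: "x = (a, t, z)" "y = (b, u, w)" by (cases x; cases y)
  have "l1norm r (\<lambda>i. if t i then - b i else b i) = l1norm r b"
    unfolding l1norm_def by (rule sum.cong) auto
  then have "l1norm r (\<lambda>i. a i + (if t i then - b i else b i)) \<le> l1norm r a + l1norm r b"
    using l1norm_add_le[of r a "\<lambda>i. if t i then - b i else b i"] by simp
  then show ?thesis using l1norm_add_le[of s z w] by (simp add: xy GZ_norm_def)
qed

lemma GZ_norm_one: "GZ_norm r s \<one>\<^bsub>\<Gamma>\<^esub> = 0"
  by (simp add: GZ_norm_def l1norm_def)

lemma std_gens_carrier: "std_gens r s \<subseteq> carrier \<Gamma>"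
  by (auto simp: std_gens_def t_gen_def single_vec_def)

lemma finite_std_gens: "finite (std_gens r s)"
  unfolding std_gens_def by (auto intro!: finite_image_set2 finite_image_set)

lemma std_gens_memI:
  "i < r \<Longrightarrow> c \<in> {1, -1} \<Longrightarrow> transl (single_vec i c) (\<lambda>_. 0) \<in> std_gens r s"
  "i < s \<Longrightarrow> c \<in> {1, -1} \<Longrightarrow> transl (\<lambda>_. 0) (single_vec i c) \<in> std_gens r s"
  "i < r \<Longrightarrow> t_gen i \<in> std_gens r s"
  unfolding std_gens_def by blast+

lemma GZ_peel_std_gen:
  assumes "(a, t, z) \<in> carrier \<Gamma>" "GZ_word_size r s (a, t, z) = Suc n"
  obtains x g where "x \<in> std_gens r s" "g \<in> carrier \<Gamma>" "(a, t, z) = x \<otimes>\<^bsub>\<Gamma>\<^esub> g"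
    "GZ_word_size r s g = n"
proof (cases "\<exists>i<r. a i \<noteq> 0")
  case True
  then obtain i where i: "i < r" "a i \<noteq> 0" by blast
  show thesis
  proof (rule that)
    show "transl (single_vec i (sgn (a i))) (\<lambda>_. 0) \<in> std_gens r s"
      using i by (intro std_gens_memI) (auto simp: sgn_if)
    show "(a(i := a i - sgn (a i)), t, z) \<in> carrier \<Gamma>" using assms(1) i by auto
    show "(a, t, z) = transl (single_vec i (sgn (a i))) (\<lambda>_. 0) \<otimes>\<^bsub>\<Gamma>\<^esub> (a(i := a i - sgn (a i)), t, z)"
      by (simp add: single_vec_def fun_eq_iff)
    show "GZ_word_size r s (a(i := a i - sgn (a i)), t, z) = n"
      using assms(2) l1norm_sgn_step[of i r a] i by (simp add: GZ_word_size_def GZ_norm_def)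
  qed
next
  case a0: False
  show thesis
  proof (cases "\<exists>i<s. z i \<noteq> 0")
    case True
    then obtain i where i: "i < s" "z i \<noteq> 0" by blast
    show thesis
    proof (rule that)
      show "transl (\<lambda>_. 0) (single_vec i (sgn (z i))) \<in> std_gens r s"
        using i by (intro std_gens_memI) (auto simp: sgn_if)
      show "(a, t, z(i := z i - sgn (z i))) \<in> carrier \<Gamma>" using assms(1) i by auto
      show "(a, t, z) = transl (\<lambda>_. 0) (single_vec i (sgn (z i))) \<otimes>\<^bsub>\<Gamma>\<^esub> (a, t, z(i := z i - sgn (z i)))"
        by (simp add: single_vec_def fun_eq_iff)
      show "GZ_word_size r s (a, t, z(i := z i - sgn (z i))) = n"
        using assms(2) l1norm_sgn_step[of i s z] i by (simp add: GZ_word_size_def GZ_norm_def)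
    qed
  next
    case False
    then have "GZ_norm r s (a, t, z) = 0" using a0 by (simp add: GZ_norm_def l1norm_eq_0_iff)
    then have card: "card {i. i < r \<and> t i} = Suc n" using assms(2) by (simp add: GZ_word_size_def)
    then obtain i where i: "i < r" "t i" by (metis (mono_tags) Collect_empty_eq card.empty nat.simps(3))
    show thesis
    proof (rule that)
      show "t_gen i \<in> std_gens r s" using i(1) by (rule std_gens_memI(3))
      show "(a, t(i := False), z) \<in> carrier \<Gamma>" using assms(1) by auto
      have "a = (\<lambda>_. 0)" using a0 assms(1) by (auto simp: fun_eq_iff) (meson not_le)
      then show "(a, t, z) = t_gen i \<otimes>\<^bsub>\<Gamma>\<^esub> (a, t(i := False), z)"
        using i by (simp add: t_gen_def fun_eq_iff)
      have "{j. j < r \<and> (t(i := False)) j} = {j. j < r \<and> t j} - {i}" by auto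
      then show "GZ_word_size r s (a, t(i := False), z) = n"
        using card i \<open>GZ_norm r s (a, t, z) = 0\<close> by (simp add: GZ_word_size_def GZ_norm_def)
    qed
  qed
qed

lemma GZ_std_decomposition:
  "g \<in> carrier \<Gamma> \<Longrightarrow>
     \<exists>xs. set xs \<subseteq> std_gens r s \<and> length xs = GZ_word_size r s g \<and> foldr (\<otimes>\<^bsub>\<Gamma>\<^esub>) xs \<one>\<^bsub>\<Gamma>\<^esub> = g"
proof (induction "GZ_word_size r s g" arbitrary: g)
  case 0
  obtain a t z where g: "g = (a, t, z)" by (cases g)
  then have "a = (\<lambda>_. 0)" "z = (\<lambda>_. 0)" "t = (\<lambda>_. False)"
    using 0 by (auto simp: GZ_word_size_def GZ_norm_def l1norm_eq_0_iff fun_eq_iff) (meson not_le)+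
  then show ?case using g 0 by (intro exI[of _ "[]"]) simp
next
  case (Suc n)
  obtain a t z where g: "g = (a, t, z)" by (cases g)
  obtain x g' where x: "x \<in> std_gens r s" "g' \<in> carrier \<Gamma>" "g = x \<otimes>\<^bsub>\<Gamma>\<^esub> g'"
    and n: "GZ_word_size r s g' = n"
    using GZ_peel_std_gen Suc.prems Suc.hyps(2) unfolding g by metis
  obtain xs where "set xs \<subseteq> std_gens r s" "length xs = n" "foldr (\<otimes>\<^bsub>\<Gamma>\<^esub>) xs \<one>\<^bsub>\<Gamma>\<^esub> = g'"
    using Suc.hyps(1)[OF n[symmetric] x(2)] n by blast
  then show ?case using x Suc.hyps(2) by (intro exI[of _ "x # xs"]) auto
qed

lemma gen_set_std_gens: "gen_set \<Gamma> (std_gens r s)"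
  using group.gen_set_of_decomposition[OF GZ_group finite_std_gens std_gens_carrier]
    GZ_std_decomposition by blast

lemma wordlen_le_GZ_norm:
  assumes "gen_set \<Gamma> S"
  shows "\<exists>L. \<forall>g\<in>carrier \<Gamma>. wordlen \<Gamma> S g \<le> L * (GZ_norm r s g + r)"
proof (rule group.wordlen_le_decomposition_length[OF GZ_group assms finite_std_gens std_gens_carrier])
  fix g assume "g \<in> carrier \<Gamma>"
  then obtain xs where xs: "set xs \<subseteq> std_gens r s" "length xs = GZ_word_size r s g"
    "foldr (\<otimes>\<^bsub>\<Gamma>\<^esub>) xs \<one>\<^bsub>\<Gamma>\<^esub> = g"
    using GZ_std_decomposition by blast
  moreover have "GZ_word_size r s g \<le> GZ_norm r s g + r"
    using card_mono[of "{..<r}" "{i. i < r \<and> fst (snd g) i}"] by (auto simp: GZ_word_size_def)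
  ultimately show "\<exists>xs. set xs \<subseteq> std_gens r s \<and> length xs \<le> GZ_norm r s g + r
                     \<and> foldr (\<otimes>\<^bsub>\<Gamma>\<^esub>) xs \<one>\<^bsub>\<Gamma>\<^esub> = g"
    by (intro exI[of _ xs]) simp
qed

lemma GZ_norm_le_wordlen:
  "gen_set \<Gamma> S \<Longrightarrow> \<exists>C. \<forall>g\<in>carrier \<Gamma>. GZ_norm r s g \<le> C * wordlen \<Gamma> S g"
  using group.subadditive_le_wordlen[OF GZ_group] GZ_norm_mult GZ_norm_one by blast

subsection \<open>Upper bound\<close>

lemma GZ_iso_of_Z_automorphism:
  assumes add: "\<And>v w. \<psi> (\<lambda>i. v i + w i) = (\<lambda>i. \<psi> v i + \<psi> w i)"
    and closed: "\<And>v. \<forall>i\<ge>s. v i = 0 \<Longrightarrow> \<forall>i\<ge>s. \<psi> v i = 0" "\<And>v. \<forall>i\<ge>s. v i = 0 \<Longrightarrow> \<forall>i\<ge>s. \<psi>' v i = 0"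
    and inverse: "\<And>v. \<forall>i\<ge>s. v i = 0 \<Longrightarrow> \<psi>' (\<psi> v) = v" "\<And>v. \<forall>i\<ge>s. v i = 0 \<Longrightarrow> \<psi> (\<psi>' v) = v"
  shows "(\<lambda>(a, t, z). (a, t, \<psi> z)) \<in> iso \<Gamma> \<Gamma>"
proof (rule isoI)
  show "(\<lambda>(a, t, z). (a, t, \<psi> z)) \<in> hom \<Gamma> \<Gamma>"
    using closed(1) by (auto intro!: homI simp: add)
  show "bij_betw (\<lambda>(a, t, z). (a, t, \<psi> z)) (carrier \<Gamma>) (carrier \<Gamma>)"
    by (rule bij_betw_byWitness[where f'="\<lambda>(a, t, z). (a, t, \<psi>' z)"])
      (use closed inverse in auto)
qed

lemma GZ_orbit_representative:
  assumes "0 < s" "(a, t, z) \<in> carrier \<Gamma>"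
  shows "\<exists>d\<ge>0. nat d \<le> l1norm s z \<and> (a, t, single_vec 0 d) \<in> aut_orbit \<Gamma> (a, t, z)"
proof -
  let ?Z = "{v. (a, t, v) \<in> aut_orbit \<Gamma> (a, t, z)}"
  have "\<exists>d\<ge>0. nat d \<le> l1norm s z \<and> single_vec 0 d \<in> ?Z"
  proof (rule shear_reduce_to_first_coordinate)
    fix v i j and c :: int assume "v \<in> ?Z" "i < s" "j < s" "i \<noteq> j"
    moreover have "(\<lambda>(a, t, v). (a, t, v(i := v i + c * v j))) \<in> iso \<Gamma> \<Gamma>"
      by (rule GZ_iso_of_Z_automorphism[where \<psi>'="\<lambda>v. v(i := v i - c * v j)"])
        (use \<open>i < s\<close> \<open>i \<noteq> j\<close> in \<open>auto simp: fun_eq_iff algebra_simps\<close>)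
    ultimately show "v(i := v i + c * v j) \<in> ?Z"
      using aut_orbit_trans aut_orbitI[of _ "\<Gamma>" "(a, t, v)"] by fastforce
  next
    fix v assume "v \<in> ?Z"
    moreover have "(\<lambda>(a, t, v). (a, t, \<lambda>k. - v k)) \<in> iso \<Gamma> \<Gamma>"
      by (rule GZ_iso_of_Z_automorphism[where \<psi>'="\<lambda>v k. - v k"]) auto
    ultimately show "(\<lambda>k. - v k) \<in> ?Z"
      using aut_orbit_trans aut_orbitI[of _ "\<Gamma>" "(a, t, v)"] by fastforce
  qed (use assms aut_orbit_refl in auto)
  then show ?thesis by simp
qed

lemma GZ_ball_orbits_subset:
  assumes "0 < s" and norm_le: "\<forall>g\<in>carrier \<Gamma>. GZ_norm r s g \<le> C * wordlen \<Gamma> S g"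
  shows "aut_orbit \<Gamma> ` {g \<in> carrier \<Gamma>. wordlen \<Gamma> S g \<le> m} \<subseteq>
           (\<lambda>(a, t, d). aut_orbit \<Gamma> (a, t, single_vec 0 d)) ` orbit_reps r (C * m)"
proof clarify
  fix a t z assume g: "(a, t, z) \<in> carrier \<Gamma>" "wordlen \<Gamma> S (a, t, z) \<le> m"
  then have norm: "l1norm r a + l1norm s z \<le> C * m"
    using order_trans[OF norm_le[rule_format, OF g(1)] mult_le_mono2[OF g(2)]]
    unfolding GZ_norm_def by simp
  obtain d where d: "0 \<le> d" "nat d \<le> l1norm s z" "(a, t, single_vec 0 d) \<in> aut_orbit \<Gamma> (a, t, z)"
    using GZ_orbit_representative[OF assms(1) g(1)] by blast
  have "\<bar>a i\<bar> \<le> int (C * m)" if "i < r" for i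
    using abs_le_l1norm[OF that, of a] norm by linarith
  moreover have "d \<le> int (C * m)" using d(1,2) norm by linarith
  ultimately have "(a, t, d) \<in> orbit_reps r (C * m)"
    using g(1) d(1) unfolding orbit_reps_def by (auto simp: abs_le_iff minus_le_iff)
  moreover have "aut_orbit \<Gamma> (a, t, z) = aut_orbit \<Gamma> (a, t, single_vec 0 d)"
    using group.aut_orbit_eq[OF GZ_group g(1) d(3)] by simp
  ultimately show "aut_orbit \<Gamma> (a, t, z) \<in>
      (\<lambda>(a, t, d). aut_orbit \<Gamma> (a, t, single_vec 0 d)) ` orbit_reps r (C * m)"
    by (intro image_eqI[of _ _ "(a, t, d)"]) auto
qed

lemma GZ_ball_orbits_finite_card:
  assumes "0 < s" "\<forall>g\<in>carrier \<Gamma>. GZ_norm r s g \<le> C * wordlen \<Gamma> S g"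
  shows "finite (aut_orbit \<Gamma> ` {g \<in> carrier \<Gamma>. wordlen \<Gamma> S g \<le> m})"
    and "autgrowth \<Gamma> S m \<le> (2 * C * m + 1) ^ r * 2 ^ r * (C * m + 1)"
proof -
  let ?f = "\<lambda>(a, t, d). aut_orbit \<Gamma> (a, t, single_vec 0 d)"
  note sub = GZ_ball_orbits_subset[OF assms, of m]
  then show "finite (aut_orbit \<Gamma> ` {g \<in> carrier \<Gamma>. wordlen \<Gamma> S g \<le> m})"
    by (rule finite_subset[OF _ finite_imageI[OF orbit_reps_finite_card(1)]])
  have "autgrowth \<Gamma> S m \<le> card (?f ` orbit_reps r (C * m))"
    unfolding autgrowth_def using sub orbit_reps_finite_card(1) by (intro card_mono) auto
  also have "\<dots> \<le> card (orbit_reps r (C * m))" by (rule card_image_le[OF orbit_reps_finite_card(1)])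
  finally show "autgrowth \<Gamma> S m \<le> (2 * C * m + 1) ^ r * 2 ^ r * (C * m + 1)"
    by (simp add: orbit_reps_finite_card(2) mult.assoc)
qed

lemma GZ_autgrowth_upper:
  assumes "0 < s" "gen_set \<Gamma> S"
  shows "growth_le (autgrowth \<Gamma> S) (\<lambda>n. n ^ (r + 1))"
proof -
  obtain C where C: "\<forall>g\<in>carrier \<Gamma>. GZ_norm r s g \<le> C * wordlen \<Gamma> S g"
    using GZ_norm_le_wordlen[OF assms(2)] by blast
  show ?thesis
  proof (rule growth_le_power)
    fix n
    have "autgrowth \<Gamma> S n \<le> (2 * C * n + 1) ^ r * 2 ^ r * (C * n + 1)"
      by (rule GZ_ball_orbits_finite_card(2)[OF assms(1) C])
    also have "\<dots> \<le> ((2 * C + 1) * (n + 1)) ^ r * 2 ^ r * ((2 * C + 1) * (n + 1))"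
      by (intro mult_mono power_mono) (auto simp: algebra_simps)
    also have "\<dots> = 2 ^ r * (2 * C + 1) ^ (r + 1) * (n + 1) ^ (r + 1)"
    proof -
      have "(X * Y) ^ r * z * (X * Y) = z * X ^ (r + 1) * Y ^ (r + 1)" for X Y z :: nat
        by (simp add: power_mult_distrib mult_ac)
      then show ?thesis .
    qed
    finally show "autgrowth \<Gamma> S n \<le> 2 ^ r * (2 * C + 1) ^ (r + 1) * (n + 1) ^ (r + 1)" .
  qed
qed

subsection \<open>Rigidity of automorphisms\<close>

lemma GZ_transl_pow: "transl b w [^]\<^bsub>\<Gamma>\<^esub> (n::nat) = transl (\<lambda>j. int n * b j) (\<lambda>j. int n * w j)"
  by (induction n) (auto simp: fun_eq_iff algebra_simps)

lemma GZ_commutes_transl_iff: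
  "(c, u, v) \<otimes>\<^bsub>\<Gamma>\<^esub> transl b w = transl b w \<otimes>\<^bsub>\<Gamma>\<^esub> (c, u, v) \<longleftrightarrow> (\<forall>j. u j \<longrightarrow> b j = 0)"
  by (auto simp: fun_eq_iff)

lemma GZ_inverts_transl_iff:
  "transl b w \<in> carrier \<Gamma> \<Longrightarrow>
     (c, u, v) \<otimes>\<^bsub>\<Gamma>\<^esub> transl b w = inv\<^bsub>\<Gamma>\<^esub> (transl b w) \<otimes>\<^bsub>\<Gamma>\<^esub> (c, u, v)
       \<longleftrightarrow> (\<forall>j. b j \<noteq> 0 \<longrightarrow> u j) \<and> (\<forall>j. w j = 0)"
  by (auto simp: fun_eq_iff)

lemma GZ_relation_t_a:
  assumes "i < r"
  shows "t_gen l \<otimes>\<^bsub>\<Gamma>\<^esub> a_gen i = (if l = i then inv\<^bsub>\<Gamma>\<^esub> (a_gen i) else a_gen i) \<otimes>\<^bsub>\<Gamma>\<^esub> t_gen l"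
  using assms by (auto simp: a_gen_def t_gen_def single_vec_def fun_eq_iff)

lemma GZ_transl_commutes_with_conjugates:
  "transl b w \<in> carrier \<Gamma> \<Longrightarrow> commutes_with_conjugates \<Gamma> (transl b w)"
  unfolding commutes_with_conjugates_def by (auto simp: fun_eq_iff)

lemma GZ_commutes_with_conjugates_imp_transl:
  assumes "(b, u, w) \<in> carrier \<Gamma>" "commutes_with_conjugates \<Gamma> (b, u, w)"
  shows "u = (\<lambda>_. False)"
proof (rule ccontr)
  assume "u \<noteq> (\<lambda>_. False)"
  then obtain j where j: "u j" by auto
  then have "j < r" using assms(1) by (meson GZ_carrier_iff not_le)
  then have "a_gen j \<in> carrier \<Gamma>" by (simp add: a_gen_def single_vec_def)
  then have "(b, u, w) \<otimes>\<^bsub>\<Gamma>\<^esub> (a_gen j \<otimes>\<^bsub>\<Gamma>\<^esub> (b, u, w) \<otimes>\<^bsub>\<Gamma>\<^esub> inv\<^bsub>\<Gamma>\<^esub> a_gen j) =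
      (a_gen j \<otimes>\<^bsub>\<Gamma>\<^esub> (b, u, w) \<otimes>\<^bsub>\<Gamma>\<^esub> inv\<^bsub>\<Gamma>\<^esub> a_gen j) \<otimes>\<^bsub>\<Gamma>\<^esub> (b, u, w)"
    using assms(2) unfolding commutes_with_conjugates_def by blast
  \<comment> \<open>conjugation by a_j adds 2 e_j to b, and the flip at j negates it on one side only\<close>
  then have "fst ((b, u, w) \<otimes>\<^bsub>\<Gamma>\<^esub> (a_gen j \<otimes>\<^bsub>\<Gamma>\<^esub> (b, u, w) \<otimes>\<^bsub>\<Gamma>\<^esub> inv\<^bsub>\<Gamma>\<^esub> a_gen j)) j =
      fst ((a_gen j \<otimes>\<^bsub>\<Gamma>\<^esub> (b, u, w) \<otimes>\<^bsub>\<Gamma>\<^esub> inv\<^bsub>\<Gamma>\<^esub> a_gen j) \<otimes>\<^bsub>\<Gamma>\<^esub> (b, u, w)) j"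
    by (rule arg_cong)
  then show False using j \<open>a_gen j \<in> carrier \<Gamma>\<close> by (simp add: a_gen_def single_vec_def)
qed

lemma GZ_central_imp:
  assumes "(c, u, v) \<in> carrier \<Gamma>" "central \<Gamma> (c, u, v)"
  shows "c = (\<lambda>_. 0) \<and> u = (\<lambda>_. False)"
proof -
  have "c j = 0 \<and> \<not> u j" for j
  proof (cases "j < r")
    case True
    then have "a_gen j \<in> carrier \<Gamma>" "t_gen j \<in> carrier \<Gamma>"
      by (auto simp: a_gen_def t_gen_def single_vec_def)
    then have "fst ((c, u, v) \<otimes>\<^bsub>\<Gamma>\<^esub> a_gen j) j = fst (a_gen j \<otimes>\<^bsub>\<Gamma>\<^esub> (c, u, v)) j"
      "fst ((c, u, v) \<otimes>\<^bsub>\<Gamma>\<^esub> t_gen j) j = fst (t_gen j \<otimes>\<^bsub>\<Gamma>\<^esub> (c, u, v)) j"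
      using assms(2) unfolding central_def by metis+
    then show ?thesis by (auto simp: a_gen_def t_gen_def single_vec_def split: if_splits)
  qed (use assms(1) in auto)
  then show ?thesis by auto
qed

lemma GZ_central_transl: "central \<Gamma> (transl (\<lambda>_. 0) w)"
  unfolding central_def by (auto simp: fun_eq_iff add.commute)

lemma GZ_aut_image_a_gen:
  assumes \<phi>: "\<phi> \<in> iso \<Gamma> \<Gamma>" and i: "i < r"
  obtains b where "\<phi> (a_gen i) = transl b (\<lambda>_. 0)" "b \<noteq> (\<lambda>_. 0)"
    "\<forall>j. b j \<noteq> 0 \<longrightarrow> fst (snd (\<phi> (t_gen i))) j"
    "\<forall>l<r. l \<noteq> i \<longrightarrow> (\<forall>j. b j \<noteq> 0 \<longrightarrow> \<not> fst (snd (\<phi> (t_gen l))) j)"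
proof -
  interpret group_hom "\<Gamma>" "\<Gamma>" \<phi> using iso_group_hom[OF GZ_group GZ_group \<phi>] .
  have A: "a_gen i \<in> carrier \<Gamma>" using i by (simp add: a_gen_def single_vec_def)
  have T: "t_gen l \<in> carrier \<Gamma>" if "l < r" for l using that by (simp add: t_gen_def)
  have "commutes_with_conjugates \<Gamma> (\<phi> (a_gen i))"
    using commutes_with_conjugates_iso[OF GZ_group GZ_group \<phi> A] GZ_transl_commutes_with_conjugates A
    by (simp add: a_gen_def)
  then obtain b w where bw: "\<phi> (a_gen i) = transl b w" "transl b w \<in> carrier \<Gamma>"
    using GZ_commutes_with_conjugates_imp_transl A by (metis prod.collapse hom_closed)
  have rel: "\<phi> (t_gen l) \<otimes>\<^bsub>\<Gamma>\<^esub> transl b w =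
      (if l = i then inv\<^bsub>\<Gamma>\<^esub> (transl b w) else transl b w) \<otimes>\<^bsub>\<Gamma>\<^esub> \<phi> (t_gen l)" if "l < r" for l
    using arg_cong[OF GZ_relation_t_a[OF i, of l], of \<phi>] A T[OF that] bw(1) by (simp split: if_splits)
  have inverts: "(\<forall>j. b j \<noteq> 0 \<longrightarrow> fst (snd (\<phi> (t_gen i))) j) \<and> (\<forall>j. w j = 0)"
  proof -
    obtain c u v where "\<phi> (t_gen i) = (c, u, v)" by (cases "\<phi> (t_gen i)")
    then show ?thesis using rel[OF i] GZ_inverts_transl_iff[OF bw(2), of c u v] by simp
  qed
  have commutes: "\<forall>j. b j \<noteq> 0 \<longrightarrow> \<not> fst (snd (\<phi> (t_gen l))) j" if "l < r" "l \<noteq> i" for l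
  proof -
    obtain c u v where "\<phi> (t_gen l) = (c, u, v)" by (cases "\<phi> (t_gen l)")
    then show ?thesis using rel[OF that(1)] that(2) GZ_commutes_transl_iff[of c u v b w] by auto
  qed
  have "b \<noteq> (\<lambda>_. 0)"
  proof
    assume "b = (\<lambda>_. 0)"
    then have "\<phi> (a_gen i) = \<phi> \<one>\<^bsub>\<Gamma>\<^esub>" unfolding hom_one using bw(1) inverts by (simp add: fun_eq_iff)
    moreover have "inj_on \<phi> (carrier \<Gamma>)" "\<one>\<^bsub>\<Gamma>\<^esub> \<in> carrier \<Gamma>" using \<phi> by (simp_all add: Group.iso_iff)
    ultimately have "a_gen i = \<one>\<^bsub>\<Gamma>\<^esub>" using A by (metis inj_onD)
    then show False by (auto simp: a_gen_def single_vec_def fun_eq_iff dest: spec[of _ i])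
  qed
  moreover have "w = (\<lambda>_. 0)" using inverts by auto
  ultimately show thesis using that bw(1) inverts commutes by blast
qed

lemma GZ_aut_probe_a_scaling:
  assumes \<phi>: "\<phi> \<in> iso \<Gamma> \<Gamma>" and i: "i < r"
    and g: "probe a k \<in> carrier \<Gamma>" "\<phi> (probe a k) = probe a' k'" and pos: "0 < a i"
    and b: "\<phi> (a_gen i) = transl b (\<lambda>_. 0)" and j: "fst (snd (\<phi> (t_gen i))) j"
  shows "a' j = a i * b j"
proof -
  interpret group_hom "\<Gamma>" "\<Gamma>" \<phi> using iso_group_hom[OF GZ_group GZ_group \<phi>] .
  define m where "m = nat (2 * a i)"
  have A: "a_gen i \<in> carrier \<Gamma>" and T: "t_gen i \<in> carrier \<Gamma>"
    using i by (simp_all add: a_gen_def t_gen_def single_vec_def)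
  \<comment> \<open>conjugation by t_i negates the i-th coordinate\<close>
  have X: "probe a k \<otimes>\<^bsub>\<Gamma>\<^esub> inv\<^bsub>\<Gamma>\<^esub> (t_gen i \<otimes>\<^bsub>\<Gamma>\<^esub> probe a k \<otimes>\<^bsub>\<Gamma>\<^esub> inv\<^bsub>\<Gamma>\<^esub> t_gen i) = a_gen i [^]\<^bsub>\<Gamma>\<^esub> m"
    using g(1) i pos unfolding probe_def t_gen_def a_gen_def m_def
    by (simp add: GZ_transl_pow fun_eq_iff single_vec_def)
  have Y: "\<phi> (probe a k) \<otimes>\<^bsub>\<Gamma>\<^esub> inv\<^bsub>\<Gamma>\<^esub> (\<phi> (t_gen i) \<otimes>\<^bsub>\<Gamma>\<^esub> \<phi> (probe a k) \<otimes>\<^bsub>\<Gamma>\<^esub> inv\<^bsub>\<Gamma>\<^esub> \<phi> (t_gen i))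
      = \<phi> (a_gen i) [^]\<^bsub>\<Gamma>\<^esub> m"
    using arg_cong[OF X, of \<phi>] g(1) A T by (simp add: hom_nat_pow G.m_closed)
  obtain c u v where tau: "\<phi> (t_gen i) = (c, u, v)" "(c, u, v) \<in> carrier \<Gamma>"
    using T by (metis prod_cases3 hom_closed)
  have "probe a' k' \<in> carrier \<Gamma>" using g hom_closed by metis
  then have "fst (\<phi> (probe a k) \<otimes>\<^bsub>\<Gamma>\<^esub> inv\<^bsub>\<Gamma>\<^esub> (\<phi> (t_gen i) \<otimes>\<^bsub>\<Gamma>\<^esub> \<phi> (probe a k) \<otimes>\<^bsub>\<Gamma>\<^esub> inv\<^bsub>\<Gamma>\<^esub> \<phi> (t_gen i))) j
      = a' j + (if u j then a' j else - a' j)"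
    using tau g(2) by (simp add: probe_def)
  moreover have "fst (\<phi> (a_gen i) [^]\<^bsub>\<Gamma>\<^esub> m) j = int m * b j" using b by (simp add: GZ_transl_pow)
  ultimately have "a' j + (if u j then a' j else - a' j) = int m * b j" using Y by simp
  then show ?thesis using j tau(1) pos unfolding m_def by simp
qed

lemma GZ_aut_probe_z_le:
  assumes \<phi>: "\<phi> \<in> iso \<Gamma> \<Gamma>" and "0 < s"
    and g: "probe a k \<in> carrier \<Gamma>" "\<phi> (probe a k) = probe a' k'" and pos: "0 < k" "0 < k'"
  shows "k \<le> k'"
proof -
  interpret group_hom "\<Gamma>" "\<Gamma>" \<phi> using iso_group_hom[OF GZ_group GZ_group \<phi>] .
  define m where "m = nat (2 * k)"
  have Z: "z_gen \<in> carrier \<Gamma>" and T: "t_all r \<in> carrier \<Gamma>"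
    using \<open>0 < s\<close> by (simp_all add: z_gen_def t_all_def single_vec_def)
  have "central \<Gamma> (\<phi> z_gen)"
    using central_iso[OF GZ_group GZ_group \<phi> Z] GZ_central_transl by (simp add: z_gen_def)
  then obtain w where w: "\<phi> z_gen = transl (\<lambda>_. 0) w"
    using GZ_central_imp Z hom_closed by (metis prod.collapse)
  \<comment> \<open>conjugation by t_1 ... t_r negates every A-coordinate\<close>
  have X: "probe a k \<otimes>\<^bsub>\<Gamma>\<^esub> (t_all r \<otimes>\<^bsub>\<Gamma>\<^esub> probe a k \<otimes>\<^bsub>\<Gamma>\<^esub> inv\<^bsub>\<Gamma>\<^esub> t_all r) = z_gen [^]\<^bsub>\<Gamma>\<^esub> m"
    using g(1) pos unfolding probe_def t_all_def z_gen_def m_def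
    by (auto simp: GZ_transl_pow fun_eq_iff single_vec_def)
  have Y: "\<phi> (probe a k) \<otimes>\<^bsub>\<Gamma>\<^esub> (\<phi> (t_all r) \<otimes>\<^bsub>\<Gamma>\<^esub> \<phi> (probe a k) \<otimes>\<^bsub>\<Gamma>\<^esub> inv\<^bsub>\<Gamma>\<^esub> \<phi> (t_all r))
      = \<phi> z_gen [^]\<^bsub>\<Gamma>\<^esub> m"
    using arg_cong[OF X, of \<phi>] g(1) Z T by (simp add: hom_nat_pow G.m_closed)
  obtain c u v where tau: "\<phi> (t_all r) = (c, u, v)" "(c, u, v) \<in> carrier \<Gamma>"
    using T by (metis prod_cases3 hom_closed)
  have "snd (snd (\<phi> (probe a k) \<otimes>\<^bsub>\<Gamma>\<^esub> (\<phi> (t_all r) \<otimes>\<^bsub>\<Gamma>\<^esub> \<phi> (probe a k) \<otimes>\<^bsub>\<Gamma>\<^esub> inv\<^bsub>\<Gamma>\<^esub> \<phi> (t_all r)))) 0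
      = 2 * k'"
    using tau g(2) by (simp add: probe_def single_vec_def)
  moreover have "snd (snd (\<phi> z_gen [^]\<^bsub>\<Gamma>\<^esub> m)) 0 = int m * w 0" using w by (simp add: GZ_transl_pow)
  ultimately have "k' = k * w 0" using Y pos unfolding m_def by simp
  then show ?thesis using pos by (simp add: zero_less_mult_iff)
qed

lemma GZ_aut_probe_coordinate_le:
  assumes \<phi>: "\<phi> \<in> iso \<Gamma> \<Gamma>" and i: "i < r"
    and g: "probe a k \<in> carrier \<Gamma>" "\<phi> (probe a k) = probe a' k'"
    and pos: "\<And>j. j < r \<Longrightarrow> 0 < a j" "\<And>j. j < r \<Longrightarrow> 0 < a' j"
  obtains j where "j < r" "a i \<le> a' j" "fst (snd (\<phi> (t_gen i))) j"
    "\<forall>l<r. l \<noteq> i \<longrightarrow> \<not> fst (snd (\<phi> (t_gen l))) j"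
proof -
  obtain b where b: "\<phi> (a_gen i) = transl b (\<lambda>_. 0)" "b \<noteq> (\<lambda>_. 0)"
    "\<forall>j. b j \<noteq> 0 \<longrightarrow> fst (snd (\<phi> (t_gen i))) j"
    "\<forall>l<r. l \<noteq> i \<longrightarrow> (\<forall>j. b j \<noteq> 0 \<longrightarrow> \<not> fst (snd (\<phi> (t_gen l))) j)"
    using GZ_aut_image_a_gen[OF \<phi> i] by blast
  from b(2) obtain j where j: "b j \<noteq> 0" by (meson ext)
  have "a_gen i \<in> carrier \<Gamma>" using i by (simp add: a_gen_def single_vec_def)
  then have "transl b (\<lambda>_. 0) \<in> carrier \<Gamma>"
    using b(1) \<phi> by (metis Group.iso_iff image_eqI)
  then have "j < r" using j by (meson GZ_carrier_iff not_le)
  moreover have "a' j = a i * b j"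
    using GZ_aut_probe_a_scaling[OF \<phi> i g pos(1)[OF i] b(1)] b(3) j by blast
  then have "a i \<le> a' j"
    using pos(1)[OF i] pos(2)[OF \<open>j < r\<close>] by (simp add: zero_less_mult_iff)
  ultimately show thesis using that b(3,4) j by blast
qed

lemma GZ_aut_probe_le:
  assumes \<phi>: "\<phi> \<in> iso \<Gamma> \<Gamma>" and "0 < s"
    and a: "a \<in> probe_coeffs r n" and a': "a' \<in> probe_coeffs r n" and k: "1 \<le> k" "1 \<le> k'"
    and eq: "\<phi> (probe a k) = probe a' k'"
  shows "(\<forall>i<r. a i \<le> a' i) \<and> k \<le> k'"
proof -
  have g: "probe a k \<in> carrier \<Gamma>" using a \<open>0 < s\<close> by (auto simp: probe_def probe_coeffs_def single_vec_def)
  have pos: "0 < a i" "0 < a' i" if "i < r" for i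
  proof -
    have "int (i * n) < a i" "int (i * n) < a' i" using a a' that unfolding probe_coeffs_def by auto
    then show "0 < a i" "0 < a' i" by (meson of_nat_0_le_iff le_less_trans)+
  qed
  have "\<exists>j. j < r \<and> a i \<le> a' j \<and> fst (snd (\<phi> (t_gen i))) j
      \<and> (\<forall>l<r. l \<noteq> i \<longrightarrow> \<not> fst (snd (\<phi> (t_gen l))) j)" if i: "i < r" for i
  proof -
    obtain j where "j < r" "a i \<le> a' j" "fst (snd (\<phi> (t_gen i))) j"
      "\<forall>l<r. l \<noteq> i \<longrightarrow> \<not> fst (snd (\<phi> (t_gen l))) j"
      using GZ_aut_probe_coordinate_le[OF \<phi> i g eq pos(1) pos(2)] .
    then show ?thesis by blast
  qed
  then obtain \<sigma> where \<sigma>: "\<And>i. i < r \<Longrightarrow> \<sigma> i < r \<and> a i \<le> a' (\<sigma> i)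
      \<and> fst (snd (\<phi> (t_gen i))) (\<sigma> i) \<and> (\<forall>l<r. l \<noteq> i \<longrightarrow> \<not> fst (snd (\<phi> (t_gen l))) (\<sigma> i))"
    by metis
  have "\<sigma> i = i" if "i < r" for i
  proof (rule inj_on_lessThan_increasing_imp_id[OF _ _ _ that])
    show "\<sigma> ` {..<r} \<subseteq> {..<r}" using \<sigma> by auto
    show "inj_on \<sigma> {..<r}" using \<sigma> unfolding inj_on_def by (metis lessThan_iff)
    \<comment> \<open>the intervals (i n, (i+1) n] containing the coefficients are ordered\<close>
    show "i \<le> \<sigma> i" if "i < r" for i
    proof -
      have "int (i * n) < a' (\<sigma> i)" "a' (\<sigma> i) \<le> int ((\<sigma> i + 1) * n)"
        using \<sigma>[OF that] a a' that unfolding probe_coeffs_def by fastforce+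
      then have "i * n < (\<sigma> i + 1) * n" by linarith
      then have "i < \<sigma> i + 1" by (meson mult_less_cancel2)
      then show ?thesis by simp
    qed
  qed
  then show ?thesis using \<sigma> GZ_aut_probe_z_le[OF \<phi> \<open>0 < s\<close> g eq] k by auto
qed

lemma GZ_probe_orbits_inj:
  assumes "0 < s" shows "inj_on (aut_orbit \<Gamma>) (probes r n)"
proof (rule inj_onI)
  fix g1 g2 assume g: "g1 \<in> probes r n" "g2 \<in> probes r n" "aut_orbit \<Gamma> g1 = aut_orbit \<Gamma> g2"
  obtain a k a' k' where ak: "g1 = probe a k" "a \<in> probe_coeffs r n" "1 \<le> k"
    and ak': "g2 = probe a' k'" "a' \<in> probe_coeffs r n" "1 \<le> k'"
    using g(1,2) unfolding probes_def by auto
  have "g2 \<in> aut_orbit \<Gamma> g1" "g1 \<in> aut_orbit \<Gamma> g2"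
    using aut_orbit_refl[of g1 "\<Gamma>"] aut_orbit_refl[of g2 "\<Gamma>"] g(3) by auto
  then obtain \<phi> \<psi> where \<phi>: "\<phi> \<in> iso \<Gamma> \<Gamma>" "\<phi> (probe a k) = probe a' k'"
    and \<psi>: "\<psi> \<in> iso \<Gamma> \<Gamma>" "\<psi> (probe a' k') = probe a k"
    unfolding aut_orbit_def ak(1) ak'(1) mem_Collect_eq by (metis (no_types))
  have le: "(\<forall>i<r. a i \<le> a' i) \<and> k \<le> k'" "(\<forall>i<r. a' i \<le> a i) \<and> k' \<le> k"
    using GZ_aut_probe_le[OF \<phi>(1) assms ak(2) ak'(2) ak(3) ak'(3) \<phi>(2)]
      GZ_aut_probe_le[OF \<psi>(1) assms ak'(2) ak(2) ak'(3) ak(3) \<psi>(2)] by auto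
  have "a = a'"
  proof
    fix i show "a i = a' i"
      using le ak(2) ak'(2) by (cases "i < r") (auto simp: probe_coeffs_def intro: order_antisym)
  qed
  then show "g1 = g2" using ak(1) ak'(1) le by simp
qed

subsection \<open>Lower bound\<close>

lemma card_probes: "card (probes r n) = n ^ (r + 1)"
proof -
  have fin: "finite (probe_coeffs r n)" and card: "card (probe_coeffs r n) = n ^ r"
    unfolding probe_coeffs_def by (subst card_funs_fixed_outside finite_funs_fixed_outside; simp)+
  have "inj_on (\<lambda>(a, k). probe a k) (probe_coeffs r n \<times> {1..int n})"
    by (auto simp: inj_on_def probe_def single_vec_def fun_eq_iff)
  then have "card (probes r n) = card (probe_coeffs r n \<times> {1..int n})"
    unfolding probes_def by (rule card_image)
  also have "\<dots> = n ^ r * n" using fin card by (simp add: card_cartesian_product)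
  finally show ?thesis by simp
qed

lemma probes_carrier: "0 < s \<Longrightarrow> probes r n \<subseteq> carrier \<Gamma>"
  by (auto simp: probes_def probe_def probe_coeffs_def single_vec_def)

lemma GZ_norm_probe_le:
  assumes "0 < s" "g \<in> probes r n"
  shows "GZ_norm r s g \<le> (r * r + 1) * n"
proof -
  obtain a k where g: "g = probe a k" "a \<in> probe_coeffs r n" "1 \<le> k" "k \<le> int n"
    using assms(2) unfolding probes_def by auto
  have "nat \<bar>a i\<bar> \<le> r * n" if "i < r" for i
  proof -
    have "int (i * n) < a i" "a i \<le> int ((i + 1) * n)"
      using g(2) that unfolding probe_coeffs_def by auto
    moreover have "(i + 1) * n \<le> r * n" using that by (intro mult_le_mono1) simp
    ultimately show ?thesis by linarith
  qed
  then have "l1norm r a \<le> r * (r * n)"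
    using sum_mono[of "{..<r}" "\<lambda>i. nat \<bar>a i\<bar>" "\<lambda>_. r * n"] by (simp add: l1norm_def)
  moreover have "l1norm s (single_vec 0 k) \<le> n" using assms(1) g(3,4) by (simp add: l1norm_single_vec)
  ultimately show ?thesis by (simp add: g(1) probe_def GZ_norm_def algebra_simps)
qed

lemma GZ_autgrowth_lower:
  assumes "0 < s" "gen_set \<Gamma> S"
  shows "growth_le (\<lambda>n. n ^ (r + 1)) (autgrowth \<Gamma> S)"
proof -
  obtain C where C: "\<forall>g\<in>carrier \<Gamma>. GZ_norm r s g \<le> C * wordlen \<Gamma> S g"
    using GZ_norm_le_wordlen[OF assms(2)] by blast
  obtain L where L: "\<forall>g\<in>carrier \<Gamma>. wordlen \<Gamma> S g \<le> L * (GZ_norm r s g + r)"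
    using wordlen_le_GZ_norm[OF assms(2)] by blast
  define c where "c = L * (r * r + 1) + L * r + 1"
  show ?thesis unfolding growth_le_def
  proof (intro exI conjI allI)
    show "c \<noteq> 0" unfolding c_def by simp
    fix n
    let ?ball = "{g \<in> carrier \<Gamma>. wordlen \<Gamma> S g \<le> c * n + c}"
    have "probes r n \<subseteq> ?ball"
    proof
      fix g assume g: "g \<in> probes r n"
      then have "wordlen \<Gamma> S g \<le> L * (GZ_norm r s g + r)" using L probes_carrier[OF assms(1)] by blast
      also have "\<dots> \<le> L * ((r * r + 1) * n + r)" using GZ_norm_probe_le[OF assms(1) g] by simp
      also have "\<dots> \<le> c * n + c" unfolding c_def by (simp add: algebra_simps)
      finally show "g \<in> ?ball" using g probes_carrier[OF assms(1)] by blast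
    qed
    then have "aut_orbit \<Gamma> ` probes r n \<subseteq> aut_orbit \<Gamma> ` ?ball" by blast
    then have "card (aut_orbit \<Gamma> ` probes r n) \<le> autgrowth \<Gamma> S (c * n + c)"
      unfolding autgrowth_def using GZ_ball_orbits_finite_card(1)[OF assms(1) C] by (rule card_mono[rotated])
    moreover have "card (aut_orbit \<Gamma> ` probes r n) = n ^ (r + 1)"
      using card_image[OF GZ_probe_orbits_inj[OF assms(1)]] card_probes by simp
    moreover have "autgrowth \<Gamma> S (c * n + c) \<le> c * autgrowth \<Gamma> S (c * n + c)"
      unfolding c_def by simp
    ultimately show "n ^ (r + 1) \<le> c * autgrowth \<Gamma> S (c * n + c) + c" by linarith
  qed
qed

lemma GZ_autgrowth: "0 < s \<Longrightarrow> gen_set \<Gamma> S \<Longrightarrow> growth_equiv (autgrowth \<Gamma> S) (\<lambda>n. n ^ (r + 1))"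
  unfolding growth_equiv_def using GZ_autgrowth_upper GZ_autgrowth_lower by blast

lemma subgroup_transl_subgroup: "subgroup (transl_subgroup r s) \<Gamma>"
proof (rule group.subgroupI[OF GZ_group])
  show "transl_subgroup r s \<noteq> {}" by (auto simp: transl_subgroup_def intro!: exI[of _ "\<one>\<^bsub>\<Gamma>\<^esub>"])
  fix g h assume "g \<in> transl_subgroup r s" "h \<in> transl_subgroup r s"
  then show "inv\<^bsub>\<Gamma>\<^esub> g \<in> transl_subgroup r s" "g \<otimes>\<^bsub>\<Gamma>\<^esub> h \<in> transl_subgroup r s"
    unfolding transl_subgroup_def by (cases g; cases h; auto)+
qed (auto simp: transl_subgroup_def)

lemma finite_rcosets_transl_subgroup: "finite (rcosets\<^bsub>\<Gamma>\<^esub> transl_subgroup r s)"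
proof -
  interpret group "\<Gamma>" by (rule GZ_group)
  let ?T = "{t. (\<forall>i<r. t i \<in> (UNIV :: bool set)) \<and> (\<forall>i\<ge>r. t i = False)}"
  have "rcosets\<^bsub>\<Gamma>\<^esub> transl_subgroup r s \<subseteq> (\<lambda>t. transl_subgroup r s #>\<^bsub>\<Gamma>\<^esub> (\<lambda>_. 0, t, \<lambda>_. 0)) ` ?T"
  proof
    fix X assume "X \<in> rcosets\<^bsub>\<Gamma>\<^esub> transl_subgroup r s"
    then obtain a t z where x: "(a, t, z) \<in> carrier \<Gamma>" "X = transl_subgroup r s #>\<^bsub>\<Gamma>\<^esub> (a, t, z)"
      unfolding RCOSETS_def by auto
    have "(a, t, z) = transl a z \<otimes>\<^bsub>\<Gamma>\<^esub> (\<lambda>_. 0, t, \<lambda>_. 0)" "transl a z \<in> transl_subgroup r s"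
      using x(1) by (auto simp: transl_subgroup_def)
    then have "(a, t, z) \<in> transl_subgroup r s #>\<^bsub>\<Gamma>\<^esub> (\<lambda>_. 0, t, \<lambda>_. 0)"
      unfolding r_coset_def by blast
    then have "X = transl_subgroup r s #>\<^bsub>\<Gamma>\<^esub> (\<lambda>_. 0, t, \<lambda>_. 0)"
      using x repr_independence[OF _ _ subgroup_transl_subgroup] by auto
    then show "X \<in> (\<lambda>t. transl_subgroup r s #>\<^bsub>\<Gamma>\<^esub> (\<lambda>_. 0, t, \<lambda>_. 0)) ` ?T" using x(1) by auto
  qed
  moreover have "finite ?T" by (rule finite_funs_fixed_outside) simp
  ultimately show ?thesis using finite_surj by blast
qed

lemma transl_subgroup_iso_Zpow: "\<Gamma>\<lparr>carrier := transl_subgroup r s\<rparr> \<cong> Zpow (r + s)"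
proof -
  let ?f = "\<lambda>g::elem. (\<lambda>i. if i < r then fst g i else snd (snd g) (i - r))"
  let ?f' = "\<lambda>v. transl (\<lambda>i. if i < r then v i else 0) (\<lambda>j. if j < s then v (j + r) else 0)"
  have "?f \<in> iso (\<Gamma>\<lparr>carrier := transl_subgroup r s\<rparr>) (Zpow (r + s))"
  proof (rule isoI)
    show "?f \<in> hom (\<Gamma>\<lparr>carrier := transl_subgroup r s\<rparr>) (Zpow (r + s))"
      by (rule homI) (auto simp: transl_subgroup_def Zpow_def fun_eq_iff)
    show "bij_betw ?f (carrier (\<Gamma>\<lparr>carrier := transl_subgroup r s\<rparr>)) (carrier (Zpow (r + s)))"
      by (rule bij_betw_byWitness[where f'="?f'"]) (auto simp: transl_subgroup_def Zpow_def fun_eq_iff)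
  qed
  then show ?thesis unfolding is_iso_def by blast
qed

lemma GZ_virt_abelian_rank: "virt_abelian_rank \<Gamma> (r + s)"
  unfolding virt_abelian_rank_def
  using GZ_group subgroup_transl_subgroup finite_rcosets_transl_subgroup transl_subgroup_iso_Zpow by blast

end

theorem mainTheorem1:
  shows "(\<forall>r s S. 0 < r \<longrightarrow> 0 < s \<longrightarrow> gen_set (GZ r s) S \<longrightarrow>
            growth_equiv (autgrowth (GZ r s) S) (\<lambda>n. n ^ (r + 1)))
       \<and> (\<forall>m k. 0 < k \<longrightarrow> k \<le> m \<longrightarrow>
            (\<exists>H :: elem monoid. virt_abelian_rank H m \<and> (\<exists>S. gen_set H S) \<and>
               (\<forall>S. gen_set H S \<longrightarrow> growth_equiv (autgrowth H S) (\<lambda>n. n ^ k))))"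
proof (intro conjI allI impI)
  fix r s :: nat and S assume "0 < s" "gen_set (GZ r s) S"
  then show "growth_equiv (autgrowth (GZ r s) S) (\<lambda>n. n ^ (r + 1))" by (rule GZ_autgrowth)
next
  fix m k :: nat assume k: "0 < k" "k \<le> m"
  \<comment> \<open>r = k - 1 may be 0 here; the rank is topped up by the free factor of rank s = m - k + 1\<close>
  then have "(k - 1) + (m - k + 1) = m" "(k - 1) + 1 = k" "0 < m - k + 1" by simp_all
  then show "\<exists>H :: elem monoid. virt_abelian_rank H m \<and> (\<exists>S. gen_set H S) \<and>
               (\<forall>S. gen_set H S \<longrightarrow> growth_equiv (autgrowth H S) (\<lambda>n. n ^ k))"
    using GZ_virt_abelian_rank[of "k - 1" "m - k + 1"] gen_set_std_gens GZ_autgrowth[of "m - k + 1" "k - 1"]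
    by metis
qed

end
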